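(* Let $G$ be a simple graph on $n$ vertices and let $k$ be an integer with $2 \le k \le n-2$. Then the $k$-token graph $F_k(G)$ is regular if and only if one of the following holds: (1) $G$ is isomorphic to the complete graph $K_n$; (2) $G$ is isomorphic to the empty graph $\overline{K_n}$ (the graph on $n$ vertices with no edges); (3) $G$ is isomorphic to the complete bipartite graph (star) $K_{1,n-1}$ and $k=n/2$; (4) $G$ is isomorphic to the complement $\overline{K_{1,n-1}}$ of the star and $k=n/2$.
   Context: For a simple graph $G=(V,E)$ on $n$ vertices and an integer $1\le k<n$, the $k$-token graph $F_k(G)$ is the graph whose vertices are all $k$-element subsets of $V$, two such subsets $A,B$ being adjacent whenever their symmetric difference $A\triangle B$ is a pair $\{a,b\}$ with $a$ adjacent to $b$ in $G$. *)

theory Defs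
  imports Main
begin

definition simple_graph :: "'a set \<Rightarrow> ('a \<Rightarrow> 'a \<Rightarrow> bool) \<Rightarrow> bool" where
  "simple_graph V E \<longleftrightarrow> finite V \<and> (\<forall>x y. E x y \<longrightarrow> x \<in> V \<and> y \<in> V)
     \<and> (\<forall>x y. E x y \<longrightarrow> E y x) \<and> (\<forall>x. \<not> E x x)"

definition token_vertices :: "'a set \<Rightarrow> nat \<Rightarrow> 'a set set" where
  "token_vertices V k = {A. A \<subseteq> V \<and> card A = k}"

definition token_adj :: "('a \<Rightarrow> 'a \<Rightarrow> bool) \<Rightarrow> 'a set \<Rightarrow> 'a set \<Rightarrow> bool" where
  "token_adj E A B \<longleftrightarrow> (\<exists>a b. (A - B) \<union> (B - A) = {a, b} \<and> E a b)"

definition degree :: "'b set \<Rightarrow> ('b \<Rightarrow> 'b \<Rightarrow> bool) \<Rightarrow> 'b \<Rightarrow> nat" where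
  "degree V E v = card {w \<in> V. E v w}"

definition regular :: "'b set \<Rightarrow> ('b \<Rightarrow> 'b \<Rightarrow> bool) \<Rightarrow> bool" where
  "regular V E \<longleftrightarrow> (\<exists>d. \<forall>v \<in> V. degree V E v = d)"

definition graph_iso :: "'a set \<Rightarrow> ('a \<Rightarrow> 'a \<Rightarrow> bool) \<Rightarrow> 'b set \<Rightarrow> ('b \<Rightarrow> 'b \<Rightarrow> bool) \<Rightarrow> bool" where
  "graph_iso V E W F \<longleftrightarrow> (\<exists>f. bij_betw f V W \<and> (\<forall>x\<in>V. \<forall>y\<in>V. E x y \<longleftrightarrow> F (f x) (f y)))"

definition complete_adj :: "nat \<Rightarrow> nat \<Rightarrow> bool" where
  "complete_adj x y \<longleftrightarrow> x \<noteq> y"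

definition empty_adj :: "nat \<Rightarrow> nat \<Rightarrow> bool" where
  "empty_adj x y \<longleftrightarrow> False"

definition star_adj :: "nat \<Rightarrow> nat \<Rightarrow> bool" where
  "star_adj x y \<longleftrightarrow> x \<noteq> y \<and> (x = 0 \<or> y = 0)"

definition costar_adj :: "nat \<Rightarrow> nat \<Rightarrow> bool" where
  "costar_adj x y \<longleftrightarrow> x \<noteq> y \<and> \<not> star_adj x y"

end

theory Submission
  imports Defs "HOL-Combinatorics.Transposition"
begin

text \<open>The neighbours of a k-set A in the token graph are the sets A - {a} \<union> {b} with a \<in> A,
  b \<notin> A and a adjacent to b, so the degree of A is the number of edges of G leaving A.
  Exchanging a vertex x of A for a vertex y outside A changes this cut size by the sum of
  [x adjacent to b] - [y adjacent to b] over the vertices b outside, minus the same sum over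
  the rest of A. If all k-sets have equal cut size, moving two further vertices u and w across
  shows that [x adjacent to u] - [y adjacent to u] does not depend on u, and counting both sides
  forces it to vanish unless n = 2k. Vanishing differences make G complete or empty; if x is
  adjacent to u but y is not, then x is adjacent and y non-adjacent to every other vertex, and G
  is a star centred at x or the complement of a star centred at y.\<close>

text \<open>Integer-valued, so that cut sizes of different sets can be subtracted.\<close>
definition cut_size :: "'a set \<Rightarrow> ('a \<Rightarrow> 'a \<Rightarrow> bool) \<Rightarrow> 'a set \<Rightarrow> int" where
  "cut_size V E A = (\<Sum>a\<in>A. \<Sum>b\<in>V - A. of_bool (E a b))"

definition complete_on :: "'a set \<Rightarrow> ('a \<Rightarrow> 'a \<Rightarrow> bool) \<Rightarrow> bool" where
  "complete_on V E \<longleftrightarrow> (\<forall>x\<in>V. \<forall>y\<in>V. E x y \<longleftrightarrow> x \<noteq> y)"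

definition edgeless_on :: "'a set \<Rightarrow> ('a \<Rightarrow> 'a \<Rightarrow> bool) \<Rightarrow> bool" where
  "edgeless_on V E \<longleftrightarrow> (\<forall>x\<in>V. \<forall>y\<in>V. \<not> E x y)"

definition star_on :: "'a set \<Rightarrow> ('a \<Rightarrow> 'a \<Rightarrow> bool) \<Rightarrow> 'a \<Rightarrow> bool" where
  "star_on V E c \<longleftrightarrow> c \<in> V \<and> (\<forall>x\<in>V. \<forall>y\<in>V. E x y \<longleftrightarrow> x \<noteq> y \<and> (x = c \<or> y = c))"

definition costar_on :: "'a set \<Rightarrow> ('a \<Rightarrow> 'a \<Rightarrow> bool) \<Rightarrow> 'a \<Rightarrow> bool" where
  "costar_on V E c \<longleftrightarrow> c \<in> V \<and> (\<forall>x\<in>V. \<forall>y\<in>V. E x y \<longleftrightarrow> x \<noteq> y \<and> x \<noteq> c \<and> y \<noteq> c)"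

lemma simple_graphD:
  assumes "simple_graph V E"
  shows "finite V" "E x y \<Longrightarrow> x \<in> V" "E x y \<Longrightarrow> y \<in> V" "E x y \<Longrightarrow> E y x" "\<not> E x x"
  using assms by (auto simp: simple_graph_def)

subsection \<open>Degrees in the token graph\<close>

lemma equicardinal_partition_of_pair:
  assumes "X \<union> Y = {a, b}" "X \<inter> Y = {}" "card X = card Y" "a \<noteq> b"
  shows "(X = {a} \<and> Y = {b}) \<or> (X = {b} \<and> Y = {a})"
proof -
  have Y: "Y = {a, b} - X" using assms(1,2) by blast
  have "X \<subseteq> {a, b}" using assms(1) by blast
  then have "X = {} \<or> X = {a} \<or> X = {b} \<or> X = {a, b}" by blast
  then show ?thesis
  proof (elim disjE)
    assume "X = {}" then show ?thesis using Y assms(3,4) by simp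
  next
    assume "X = {a, b}" then show ?thesis using Y assms(3,4) by simp
  qed (use Y assms(4) in auto)
qed

lemma token_neighbours:
  assumes G: "simple_graph V E" and A: "A \<subseteq> V" "card A = k"
  shows "{B \<in> token_vertices V k. token_adj E A B}
       = (\<lambda>(a, b). insert b (A - {a})) ` (SIGMA a:A. {b \<in> V - A. E a b})"
proof (intro equalityI subsetI)
  have "finite A" by (rule finite_subset[OF A(1) simple_graphD(1)[OF G]])
  fix B assume "B \<in> (\<lambda>(a, b). insert b (A - {a})) ` (SIGMA a:A. {b \<in> V - A. E a b})"
  then obtain a b where ab: "a \<in> A" "b \<in> V" "b \<notin> A" "E a b" and B: "B = insert b (A - {a})"
    by auto
  have "card B = k" using B ab \<open>finite A\<close> A(2) card_Suc_Diff1 by fastforce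
  moreover have "(A - B) \<union> (B - A) = {a, b}" using B ab by auto
  ultimately show "B \<in> {B \<in> token_vertices V k. token_adj E A B}"
    using B ab A(1) by (auto simp: token_vertices_def token_adj_def)
next
  fix B assume "B \<in> {B \<in> token_vertices V k. token_adj E A B}"
  then have B: "B \<subseteq> V" "card B = k" and "token_adj E A B" by (auto simp: token_vertices_def)
  then obtain a b where U: "(A - B) \<union> (B - A) = {a, b}" and ab: "E a b"
    by (auto simp: token_adj_def)
  have "finite A" "finite B"
    using A(1) B(1) finite_subset simple_graphD(1)[OF G] by auto
  then have "card (A - B) = card (B - A)"
    using A(2) B(2) by (simp add: card_Diff_subset_Int Int_commute)
  moreover have "a \<noteq> b" using ab simple_graphD(5)[OF G] by metis
  ultimately have "(A - B = {a} \<and> B - A = {b}) \<or> (A - B = {b} \<and> B - A = {a})"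
    using equicardinal_partition_of_pair[OF U] by blast
  then show "B \<in> (\<lambda>(a, b). insert b (A - {a})) ` (SIGMA a:A. {b \<in> V - A. E a b})"
  proof
    assume "A - B = {a} \<and> B - A = {b}"
    then have "B = insert b (A - {a})" "(a, b) \<in> (SIGMA a:A. {b \<in> V - A. E a b})"
      using ab B(1) by auto
    then show ?thesis by force
  next
    assume "A - B = {b} \<and> B - A = {a}"
    then have "B = insert a (A - {b})" "(b, a) \<in> (SIGMA a:A. {b \<in> V - A. E a b})"
      using simple_graphD(4)[OF G ab] B(1) by auto
    then show ?thesis by force
  qed
qed

lemma inj_on_exchange: "inj_on (\<lambda>(a, b). insert b (A - {a})) (A \<times> - A)"
proof (rule inj_onI, clarify)
  fix a b a' b'
  assume h: "a \<in> A" "a' \<in> A" "b \<notin> A" "b' \<notin> A" "insert b (A - {a}) = insert b' (A - {a'})"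
  then have "b = b'" by blast
  moreover have "a = a'"
  proof (rule ccontr)
    assume "a \<noteq> a'"
    then have "a' \<in> insert b (A - {a})" using h(2) by blast
    then have "a' \<in> insert b' (A - {a'})" by (simp only: h(5))
    then show False using h(2,4) by auto
  qed
  ultimately show "a = a' \<and> b = b'" by simp
qed

lemma token_degree_eq_cut_size:
  assumes G: "simple_graph V E" and A: "A \<subseteq> V" "card A = k"
  shows "int (degree (token_vertices V k) (token_adj E) A) = cut_size V E A"
proof -
  have fin: "finite V" "finite A" using A(1) simple_graphD(1)[OF G] finite_subset by blast+
  have inj: "inj_on (\<lambda>(a, b). insert b (A - {a})) (SIGMA a:A. {b \<in> V - A. E a b})"
    by (rule inj_on_subset[OF inj_on_exchange]) blast
  have "degree (token_vertices V k) (token_adj E) A = card (SIGMA a:A. {b \<in> V - A. E a b})"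
    unfolding degree_def token_neighbours[OF assms] using card_image[OF inj] by simp
  also have "\<dots> = (\<Sum>a\<in>A. card {b \<in> V - A. E a b})" using fin by simp
  finally have "int (degree (token_vertices V k) (token_adj E) A)
      = (\<Sum>a\<in>A. int (card {b \<in> V - A. E a b}))" by simp
  also have "\<dots> = cut_size V E A"
    unfolding cut_size_def
  proof (intro sum.cong refl)
    fix a
    have "{b \<in> V - A. E a b} = (V - A) \<inter> {b. E a b}" by blast
    then show "int (card {b \<in> V - A. E a b}) = (\<Sum>b\<in>V - A. of_bool (E a b))"
      using fin(1) by (simp only: sum_of_bool_eq finite_Diff of_nat_eq_iff)
  qed
  finally show ?thesis .
qed

lemma regular_token_graph_iff:
  assumes "simple_graph V E"
  shows "regular (token_vertices V k) (token_adj E) \<longleftrightarrow>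
    (\<exists>d. \<forall>A\<subseteq>V. card A = k \<longrightarrow> cut_size V E A = d)"
proof
  assume "regular (token_vertices V k) (token_adj E)"
  then obtain d where "\<forall>A \<in> token_vertices V k. degree (token_vertices V k) (token_adj E) A = d"
    unfolding regular_def by blast
  then have "\<forall>A\<subseteq>V. card A = k \<longrightarrow> cut_size V E A = int d"
    using token_degree_eq_cut_size[OF assms] by (auto simp: token_vertices_def)
  then show "\<exists>d. \<forall>A\<subseteq>V. card A = k \<longrightarrow> cut_size V E A = d" ..
next
  assume "\<exists>d. \<forall>A\<subseteq>V. card A = k \<longrightarrow> cut_size V E A = d"
  then obtain d where d: "\<forall>A\<subseteq>V. card A = k \<longrightarrow> cut_size V E A = d" ..
  have "degree (token_vertices V k) (token_adj E) A = nat d" if "A \<in> token_vertices V k" for A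
    using that d token_degree_eq_cut_size[OF assms, of A k]
    by (simp add: token_vertices_def nat_eq_iff)
  then have "\<forall>A \<in> token_vertices V k. degree (token_vertices V k) (token_adj E) A = nat d" ..
  then show "regular (token_vertices V k) (token_adj E)" unfolding regular_def ..
qed

subsection \<open>Exchanging two vertices between the sides of a cut\<close>

lemma cut_size_exchange:
  assumes fin: "finite V" and xy: "x \<in> V" "y \<in> V" "x \<noteq> y"
    and CD: "C \<inter> D = {}" "C \<union> D = V - {x, y}"
    and sym: "\<And>a b. E a b \<Longrightarrow> E b a"
  shows "cut_size V E (insert x C) - cut_size V E (insert y C)
       = (\<Sum>b\<in>D. of_bool (E x b) - of_bool (E y b)) - (\<Sum>a\<in>C. of_bool (E x a) - of_bool (E y a))"
proof -
  have fin': "finite C" "finite D" using fin CD(2) by (metis finite_Diff finite_Un)+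
  have out: "x \<notin> C" "y \<notin> C" "x \<notin> D" "y \<notin> D" using CD(2) by auto
  have "V - insert x C = insert y D" "V - insert y C = insert x D"
    using CD xy by blast+
  then have "cut_size V E (insert x C) = of_bool (E x y) + (\<Sum>b\<in>D. of_bool (E x b))
        + (\<Sum>a\<in>C. of_bool (E a y)) + (\<Sum>a\<in>C. \<Sum>b\<in>D. of_bool (E a b))"
    and "cut_size V E (insert y C) = of_bool (E y x) + (\<Sum>b\<in>D. of_bool (E y b))
        + (\<Sum>a\<in>C. of_bool (E a x)) + (\<Sum>a\<in>C. \<Sum>b\<in>D. of_bool (E a b))"
    unfolding cut_size_def using fin' out
    by (simp_all add: sum.distrib algebra_simps del: sum_of_bool_eq)
  moreover have "of_bool (E a b) = (of_bool (E b a) :: int)" for a b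
    using sym[of a b] sym[of b a] by (cases "E a b") auto
  ultimately show ?thesis by (simp add: sum_subtractf del: sum_of_bool_eq)
qed

lemma exchange_balance:
  assumes G: "simple_graph V E"
    and const: "\<And>A. A \<subseteq> V \<Longrightarrow> card A = k \<Longrightarrow> cut_size V E A = d"
    and xy: "x \<in> V" "y \<in> V" "x \<noteq> y" and "1 \<le> k"
    and C: "C \<subseteq> V - {x, y}" "card C = k - 1"
  shows "(\<Sum>b\<in>V - {x, y} - C. of_bool (E x b) - of_bool (E y b))
       = (\<Sum>a\<in>C. of_bool (E x a) - of_bool (E y a) :: int)"
proof -
  have "finite C" using C(1) simple_graphD(1)[OF G] by (meson finite_Diff finite_subset)
  moreover have "x \<notin> C" "y \<notin> C" using C(1) by auto
  ultimately have "card (insert x C) = k" "card (insert y C) = k"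
    using C(2) \<open>1 \<le> k\<close> by auto
  moreover have "insert x C \<subseteq> V" "insert y C \<subseteq> V" using C(1) xy by auto
  ultimately have "cut_size V E (insert x C) - cut_size V E (insert y C) = 0"
    using const by simp
  moreover have "cut_size V E (insert x C) - cut_size V E (insert y C)
      = (\<Sum>b\<in>V - {x, y} - C. of_bool (E x b) - of_bool (E y b))
        - (\<Sum>a\<in>C. of_bool (E x a) - of_bool (E y a))"
    by (rule cut_size_exchange[OF simple_graphD(1)[OF G] xy _ _ simple_graphD(4)[OF G]])
      (use C(1) in auto)
  ultimately show ?thesis by simp
qed

lemma adjacency_difference_constant:
  assumes G: "simple_graph V E" and "card V = n" and "2 \<le> k" "k + 2 \<le> n"
    and const: "\<And>A. A \<subseteq> V \<Longrightarrow> card A = k \<Longrightarrow> cut_size V E A = d"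
    and V: "x \<in> V" "y \<in> V" "u \<in> V" "w \<in> V" and dist: "distinct [x, y, u, w]"
  shows "of_bool (E x u) - of_bool (E y u) = (of_bool (E x w) - of_bool (E y w) :: int)"
proof -
  define f :: "'a \<Rightarrow> int" where "f b = of_bool (E x b) - of_bool (E y b)" for b
  define W where "W = V - {x, y}"
  have "W - {u, w} = V - {x, y, u, w}" by (auto simp: W_def)
  then have "card (W - {u, w}) = n - 4"
    using simple_graphD(1)[OF G] V dist \<open>card V = n\<close> by (simp add: card_Diff_subset)
  then have "k - 2 \<le> card (W - {u, w})" using \<open>k + 2 \<le> n\<close> by simp
  then obtain C where C: "C \<subseteq> W - {u, w}" "card C = k - 2"
    by (meson obtain_subset_with_card_n)
  have "finite W" using simple_graphD(1)[OF G] by (simp add: W_def)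
  then have fin: "finite C" "finite (W - {u, w} - C)" using C(1) finite_subset by auto
  have uw: "u \<in> W" "w \<in> W" "u \<notin> C" "w \<notin> C" using V dist C(1) by (auto simp: W_def)
  have balance: "sum f (W - insert v C) = sum f (insert v C)" if "v \<in> W" "v \<notin> C" for v
    unfolding W_def f_def
    by (rule exchange_balance[OF G const V(1,2)])
      (use that dist fin C \<open>2 \<le> k\<close> in \<open>auto simp: W_def\<close>)
  have "W - insert u C = insert w (W - {u, w} - C)"
    and "W - insert w C = insert u (W - {u, w} - C)"
    using uw dist by auto
  then have "sum f (insert w (W - {u, w} - C)) = sum f (insert u C)"
    and "sum f (insert u (W - {u, w} - C)) = sum f (insert w C)"
    using balance[OF uw(1,3)] balance[OF uw(2,4)] by simp_all
  then have "f w + sum f (W - {u, w} - C) = f u + sum f C"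
    and "f u + sum f (W - {u, w} - C) = f w + sum f C"
    using fin uw by simp_all
  then have "f u = f w" by simp
  then show ?thesis unfolding f_def .
qed

lemma adjacency_agrees_if_unbalanced:
  assumes G: "simple_graph V E" and "card V = n" and "2 \<le> k" "k + 2 \<le> n" "2 * k \<noteq> n"
    and const: "\<And>A. A \<subseteq> V \<Longrightarrow> card A = k \<Longrightarrow> cut_size V E A = d"
    and V: "x \<in> V" "y \<in> V" "u \<in> V" and dist: "distinct [x, y, u]"
  shows "E x u \<longleftrightarrow> E y u"
proof -
  define f :: "'a \<Rightarrow> int" where "f b = of_bool (E x b) - of_bool (E y b)" for b
  define W where "W = V - {x, y}"
  have "finite W" using simple_graphD(1)[OF G] by (simp add: W_def)
  have "card W = n - 2"
    using simple_graphD(1)[OF G] V dist \<open>card V = n\<close> by (simp add: W_def card_Diff_subset)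
  then have "k - 1 \<le> card W" using \<open>k + 2 \<le> n\<close> by simp
  then obtain C where C: "C \<subseteq> W" "card C = k - 1"
    by (meson obtain_subset_with_card_n)
  have f_const: "f b = f u" if "b \<in> W" for b
  proof (cases "b = u")
    case False
    show ?thesis unfolding f_def
      by (rule adjacency_difference_constant[OF G \<open>card V = n\<close> \<open>2 \<le> k\<close> \<open>k + 2 \<le> n\<close> const])
        (use V dist that False in \<open>auto simp: W_def\<close>)
  qed simp
  have "sum f (W - C) = sum f C"
    unfolding W_def f_def
    by (rule exchange_balance[OF G const V(1,2)]) (use dist \<open>2 \<le> k\<close> C in \<open>auto simp: W_def\<close>)
  moreover have "card (W - C) = n - 2 - (k - 1)"
    using C \<open>finite W\<close> \<open>card W = n - 2\<close> by (simp add: card_Diff_subset finite_subset)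
  then have "sum f (W - C) = of_nat (n - 2 - (k - 1)) * f u"
    using f_const by simp
  moreover have "sum f C = (\<Sum>b\<in>C. f u)"
    using f_const C(1) by (intro sum.cong) auto
  then have "sum f C = of_nat (k - 1) * f u"
    using C(2) by simp
  moreover have "int (n - 2 - (k - 1)) \<noteq> int (k - 1)"
    using assms(3-5) by simp
  ultimately have "f u = 0" by simp
  then show ?thesis by (simp add: f_def of_bool_eq_iff)
qed

subsection \<open>Graphs with uniform adjacency differences\<close>

lemma complete_or_edgeless:
  assumes G: "simple_graph V E"
    and agree: "\<And>x y u. x \<in> V \<Longrightarrow> y \<in> V \<Longrightarrow> u \<in> V \<Longrightarrow> distinct [x, y, u] \<Longrightarrow> E x u \<longleftrightarrow> E y u"
  shows "complete_on V E \<or> edgeless_on V E"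
proof (cases "edgeless_on V E")
  case False
  then obtain a b where "E a b" by (auto simp: edgeless_on_def)
  then have ab: "a \<in> V" "b \<in> V" "a \<noteq> b"
    using simple_graphD(2,3,5)[OF G] by metis+
  have into_b: "E w b" if "w \<in> V" "w \<noteq> b" for w
    using agree[of a w b] \<open>E a b\<close> ab that by (cases "w = a") auto
  have "E x y" if "x \<in> V" "y \<in> V" "x \<noteq> y" for x y
  proof (cases "y = b")
    case False
    then have "E b y" using into_b that simple_graphD(4)[OF G] by blast
    then show ?thesis
      using agree[of b x y] that ab(2) False by (cases "x = b") auto
  qed (use into_b that in simp)
  then have "complete_on V E"
    unfolding complete_on_def using simple_graphD(5)[OF G] by blast
  then show ?thesis ..
qed simp

lemma star_or_costar:
  assumes G: "simple_graph V E"
    and diff: "\<And>x y u w. x \<in> V \<Longrightarrow> y \<in> V \<Longrightarrow> u \<in> V \<Longrightarrow> w \<in> V \<Longrightarrow> distinct [x, y, u, w]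
      \<Longrightarrow> of_bool (E x u) - of_bool (E y u) = (of_bool (E x w) - of_bool (E y w) :: int)"
    and V: "x \<in> V" "y \<in> V" "u \<in> V" and dist: "distinct [x, y, u]"
    and "E x u" "\<not> E y u"
  shows "star_on V E x \<or> costar_on V E y"
proof -
  note sym = simple_graphD(4)[OF G] and irrefl = simple_graphD(5)[OF G]
  have x_only: "E x w \<and> \<not> E y w" if "w \<in> V" "w \<noteq> x" "w \<noteq> y" for w
    using diff[of x y u w] \<open>E x u\<close> \<open>\<not> E y u\<close> V dist that
    by (cases "w = u"; cases "E x w"; cases "E y w") auto
  have others: "E a b \<longleftrightarrow> \<not> E y x" if "a \<in> V" "b \<in> V" "distinct [a, b, x, y]" for a b
  proof -
    have "distinct [a, y, x, b]" using that(3) by auto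
    then have "of_bool (E a x) - of_bool (E y x) = (of_bool (E a b) - of_bool (E y b) :: int)"
      using diff that(1,2) V(1,2) by blast
    moreover have "E a x" "\<not> E y b" using x_only[of a] x_only[of b] sym[of x a] that by auto
    ultimately show ?thesis by (cases "E a b"; cases "E y x") auto
  qed
  show ?thesis
  proof (cases "E y x")
    case False
    have "E a b \<longleftrightarrow> a \<noteq> b \<and> a \<noteq> y \<and> b \<noteq> y" if "a \<in> V" "b \<in> V" for a b
      using others[OF that] x_only[OF that(1)] x_only[OF that(2)] sym[of a b] sym[of b a] irrefl[of a] False
      by (cases "a = x"; cases "b = x"; cases "a = y"; cases "b = y"; cases "a = b") auto
    then show ?thesis unfolding costar_on_def using V(2) by blast
  next
    case True
    have "E a b \<longleftrightarrow> a \<noteq> b \<and> (a = x \<or> b = x)" if "a \<in> V" "b \<in> V" for a b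
      using others[OF that] x_only[OF that(1)] x_only[OF that(2)] sym[of a b] sym[of b a] irrefl[of a] True
      by (cases "a = x"; cases "b = x"; cases "a = y"; cases "b = y"; cases "a = b") auto
    then show ?thesis unfolding star_on_def using V(1) by blast
  qed
qed

lemma shape_if_cut_size_constant:
  assumes G: "simple_graph V E" and "card V = n" and "2 \<le> k" "k + 2 \<le> n"
    and const: "\<And>A. A \<subseteq> V \<Longrightarrow> card A = k \<Longrightarrow> cut_size V E A = d"
  shows "complete_on V E \<or> edgeless_on V E \<or> (2 * k = n \<and> (\<exists>c. star_on V E c \<or> costar_on V E c))"
proof (cases "\<forall>x\<in>V. \<forall>y\<in>V. \<forall>u\<in>V. distinct [x, y, u] \<longrightarrow> (E x u \<longleftrightarrow> E y u)")
  case True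
  then show ?thesis using complete_or_edgeless[OF G] by blast
next
  case False
  then obtain x y u where V: "x \<in> V" "y \<in> V" "u \<in> V" and dist: "distinct [x, y, u]"
    and differ: "E x u \<noteq> E y u" by blast
  note diff = adjacency_difference_constant[OF G assms(2-4) const]
  have "2 * k = n"
    using adjacency_agrees_if_unbalanced[OF G assms(2-4) _ const V dist] differ by blast
  moreover have "star_on V E x \<or> costar_on V E y \<or> star_on V E y \<or> costar_on V E x"
  proof (cases "E x u")
    case True
    then show ?thesis using star_or_costar[OF G diff V dist True] differ by blast
  next
    case False
    then show ?thesis using star_or_costar[OF G diff V(2,1,3) _ _ False] dist differ by auto
  qed
  ultimately show ?thesis by blast
qed

subsection \<open>Cut sizes of the extremal graphs\<close>

lemma cut_size_edgeless: "edgeless_on V E \<Longrightarrow> A \<subseteq> V \<Longrightarrow> cut_size V E A = 0"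
  unfolding cut_size_def edgeless_on_def by (auto intro!: sum.neutral)

lemma cut_size_complement:
  assumes "finite V" "A \<subseteq> V" and E': "\<forall>x\<in>V. \<forall>y\<in>V. E' x y \<longleftrightarrow> x \<noteq> y \<and> \<not> E x y"
  shows "cut_size V E' A = int (card A) * int (card (V - A)) - cut_size V E A"
proof -
  have "cut_size V E' A = (\<Sum>a\<in>A. \<Sum>b\<in>V - A. 1 - of_bool (E a b))"
    unfolding cut_size_def using E' \<open>A \<subseteq> V\<close>
    by (intro sum.cong refl) (auto simp del: sum_of_bool_eq)
  then show ?thesis by (simp add: cut_size_def sum_subtractf del: sum_of_bool_eq)
qed

lemma cut_size_star:
  assumes "finite V" "A \<subseteq> V" "star_on V E c"
  shows "cut_size V E A = int (if c \<in> A then card (V - A) else card A)"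
proof -
  have "cut_size V E A = (\<Sum>a\<in>A. \<Sum>b\<in>V - A. of_bool (a = c \<or> b = c))"
    unfolding cut_size_def using assms(2,3)
    by (intro sum.cong refl) (auto simp: star_on_def simp del: sum_of_bool_eq)
  also have "\<dots> = int (if c \<in> A then card (V - A) else card A)"
  proof (cases "c \<in> A")
    case True
    then have "(\<Sum>a\<in>A. \<Sum>b\<in>V - A. of_bool (a = c \<or> b = c)) = (\<Sum>a\<in>A. of_bool (a = c) * int (card (V - A)))"
      by (intro sum.cong refl) (auto simp del: sum_of_bool_eq intro!: sum.neutral)
    then show ?thesis using True finite_subset[OF assms(2,1)] by simp
  next
    case False
    then have "(\<Sum>a\<in>A. \<Sum>b\<in>V - A. of_bool (a = c \<or> b = c)) = (\<Sum>a\<in>A. \<Sum>b\<in>V - A. of_bool (b = c))"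
      by (intro sum.cong refl) auto
    also have "\<dots> = int (card A)"
    proof -
      have "(V - A) \<inter> {b. b = c} = {c}" using False assms(3) by (auto simp: star_on_def)
      then show ?thesis using assms(1) by simp
    qed
    finally show ?thesis using False by simp
  qed
  finally show ?thesis .
qed

lemma cut_size_constant_if_shape:
  assumes "finite V" "card V = n"
    and "complete_on V E \<or> edgeless_on V E \<or> (2 * k = n \<and> (\<exists>c. star_on V E c \<or> costar_on V E c))"
  shows "\<exists>d. \<forall>A\<subseteq>V. card A = k \<longrightarrow> cut_size V E A = d"
proof -
  have card_compl: "card (V - A) = n - k" if "A \<subseteq> V" "card A = k" for A
    using that assms(1,2) by (simp add: card_Diff_subset finite_subset)
  have empty: "edgeless_on V (\<lambda>_ _. False)" by (simp add: edgeless_on_def)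
  consider "complete_on V E" | "edgeless_on V E" | c where "2 * k = n" "star_on V E c"
    | c where "2 * k = n" "costar_on V E c"
    using assms(3) by blast
  then show ?thesis
  proof cases
    case 1
    then have "cut_size V E A = int k * int (n - k)" if "A \<subseteq> V" "card A = k" for A
      using cut_size_complement[OF assms(1) that(1), where E = "\<lambda>_ _. False"] cut_size_edgeless[OF empty that(1)]
        card_compl[OF that] that(2) by (simp add: complete_on_def)
    then show ?thesis by blast
  next
    case 2
    then show ?thesis using cut_size_edgeless by blast
  next
    case (3 c)
    then have "cut_size V E A = int k" if "A \<subseteq> V" "card A = k" for A
      using cut_size_star[OF assms(1) that(1) 3(2)] card_compl[OF that] that(2) 3(1) by auto
    then show ?thesis by blast
  next
    case (4 c)
    let ?S = "\<lambda>x y. x \<noteq> y \<and> (x = c \<or> y = c)"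
    have S: "star_on V ?S c" using 4(2) by (simp add: star_on_def costar_on_def)
    have E: "\<forall>x\<in>V. \<forall>y\<in>V. E x y \<longleftrightarrow> x \<noteq> y \<and> \<not> ?S x y"
      using 4(2) by (auto simp: costar_on_def)
    have "cut_size V E A = int k * int k - int k" if "A \<subseteq> V" "card A = k" for A
      using cut_size_complement[OF assms(1) that(1) E] cut_size_star[OF assms(1) that(1) S]
        card_compl[OF that] that(2) 4(1) by auto
    then show ?thesis by blast
  qed
qed

subsection \<open>Recognising the standard graphs up to isomorphism\<close>

text \<open>Each of the four standard graphs on {0..<n} is invariant under permutations fixing 0, so
  its adjacency is a Boolean combination of i = j, i = 0 and j = 0; an isomorphism onto it is
  then pinned down by the vertex sent to 0.\<close>

lemma adjacency_via_pinned_bij: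
  assumes F: "\<And>i j. F i j \<longleftrightarrow> P (i = j) (i = 0) (j = 0)"
    and f: "bij_betw f V {0..<n}" "c \<in> V" "f c = (0::nat)"
  shows "(\<forall>x\<in>V. \<forall>y\<in>V. E x y \<longleftrightarrow> F (f x) (f y))
     \<longleftrightarrow> (\<forall>x\<in>V. \<forall>y\<in>V. E x y \<longleftrightarrow> P (x = y) (x = c) (y = c))"
proof -
  have "inj_on f V" using f(1) by (rule bij_betw_imp_inj_on)
  then have "F (f x) (f y) \<longleftrightarrow> P (x = y) (x = c) (y = c)" if "x \<in> V" "y \<in> V" for x y
    using inj_on_eq_iff[OF \<open>inj_on f V\<close> that] inj_on_eq_iff[OF \<open>inj_on f V\<close> that(1) f(2)]
      inj_on_eq_iff[OF \<open>inj_on f V\<close> that(2) f(2)] f(3) F by simp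
  then show ?thesis by auto
qed

lemma graph_iso_iff_pinned:
  fixes F :: "nat \<Rightarrow> nat \<Rightarrow> bool"
  assumes "finite V" "card V = n" "V \<noteq> {}"
    and F: "\<And>i j. F i j \<longleftrightarrow> P (i = j) (i = 0) (j = 0)"
  shows "graph_iso V E {0..<n} F \<longleftrightarrow> (\<exists>c\<in>V. \<forall>x\<in>V. \<forall>y\<in>V. E x y \<longleftrightarrow> P (x = y) (x = c) (y = c))"
proof
  assume "graph_iso V E {0..<n} F"
  then obtain f where f: "bij_betw f V {0..<n}" and E: "\<forall>x\<in>V. \<forall>y\<in>V. E x y \<longleftrightarrow> F (f x) (f y)"
    unfolding graph_iso_def by blast
  have "0 < n" using assms(1-3) card_gt_0_iff by blast
  then have "0 \<in> f ` V" using f by (simp add: bij_betw_def)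
  then obtain c where c: "c \<in> V" "f c = 0" by (metis imageE)
  then have "\<forall>x\<in>V. \<forall>y\<in>V. E x y \<longleftrightarrow> P (x = y) (x = c) (y = c)"
    using E adjacency_via_pinned_bij[where F = F and P = P, OF F f c] by simp
  then show "\<exists>c\<in>V. \<forall>x\<in>V. \<forall>y\<in>V. E x y \<longleftrightarrow> P (x = y) (x = c) (y = c)"
    using c(1) by blast
next
  assume "\<exists>c\<in>V. \<forall>x\<in>V. \<forall>y\<in>V. E x y \<longleftrightarrow> P (x = y) (x = c) (y = c)"
  then obtain c where c: "c \<in> V" and E: "\<forall>x\<in>V. \<forall>y\<in>V. E x y \<longleftrightarrow> P (x = y) (x = c) (y = c)" ..
  obtain h where h: "bij_betw h V {0..<n}" using ex_bij_betw_finite_nat[OF assms(1)] assms(2) by blast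
  have "h c \<in> {0..<n}" using h c by (metis bij_betwE)
  then have "bij_betw (transpose 0 (h c)) {0..<n} {0..<n}"
    by (intro bij_betw_transpose_iff) auto
  then have g: "bij_betw (transpose 0 (h c) \<circ> h) V {0..<n}" by (rule bij_betw_trans[OF h])
  have "(transpose 0 (h c) \<circ> h) c = 0" by simp
  then have "\<forall>x\<in>V. \<forall>y\<in>V. E x y \<longleftrightarrow> F ((transpose 0 (h c) \<circ> h) x) ((transpose 0 (h c) \<circ> h) y)"
    using E adjacency_via_pinned_bij[where F = F and P = P, OF F g c] by simp
  then show "graph_iso V E {0..<n} F"
    unfolding graph_iso_def using g by blast
qed

lemma graph_iso_complete_iff:
  "finite V \<Longrightarrow> card V = n \<Longrightarrow> V \<noteq> {} \<Longrightarrow> graph_iso V E {0..<n} complete_adj \<longleftrightarrow> complete_on V E"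
  by (subst graph_iso_iff_pinned[where P = "\<lambda>e _ _. \<not> e"])
    (auto simp: complete_adj_def complete_on_def)

lemma graph_iso_empty_iff:
  "finite V \<Longrightarrow> card V = n \<Longrightarrow> V \<noteq> {} \<Longrightarrow> graph_iso V E {0..<n} empty_adj \<longleftrightarrow> edgeless_on V E"
  by (subst graph_iso_iff_pinned[where P = "\<lambda>_ _ _. False"])
    (auto simp: empty_adj_def edgeless_on_def)

lemma graph_iso_star_iff:
  "finite V \<Longrightarrow> card V = n \<Longrightarrow> V \<noteq> {} \<Longrightarrow> graph_iso V E {0..<n} star_adj \<longleftrightarrow> (\<exists>c. star_on V E c)"
  by (subst graph_iso_iff_pinned[where P = "\<lambda>e a b. \<not> e \<and> (a \<or> b)"])
    (auto simp: star_adj_def star_on_def)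

lemma graph_iso_costar_iff:
  "finite V \<Longrightarrow> card V = n \<Longrightarrow> V \<noteq> {} \<Longrightarrow> graph_iso V E {0..<n} costar_adj \<longleftrightarrow> (\<exists>c. costar_on V E c)"
  by (subst graph_iso_iff_pinned[where P = "\<lambda>e a b. \<not> e \<and> \<not> a \<and> \<not> b"])
    (auto simp: costar_adj_def star_adj_def costar_on_def)

theorem theorem1:
  fixes V :: "'a set" and E :: "'a \<Rightarrow> 'a \<Rightarrow> bool" and n k :: nat
  assumes "simple_graph V E" and "card V = n"
    and "2 \<le> k" and "k + 2 \<le> n"
  shows "regular (token_vertices V k) (token_adj E) \<longleftrightarrow>
    (graph_iso V E {0..<n} complete_adj
     \<or> graph_iso V E {0..<n} empty_adj
     \<or> (graph_iso V E {0..<n} star_adj \<and> 2 * k = n)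
     \<or> (graph_iso V E {0..<n} costar_adj \<and> 2 * k = n))"
proof -
  have fin: "finite V" using assms(1) by (rule simple_graphD)
  have "V \<noteq> {}" using assms(2,4) by auto
  note iso = graph_iso_complete_iff[OF fin assms(2) \<open>V \<noteq> {}\<close>]
    graph_iso_empty_iff[OF fin assms(2) \<open>V \<noteq> {}\<close>]
    graph_iso_star_iff[OF fin assms(2) \<open>V \<noteq> {}\<close>]
    graph_iso_costar_iff[OF fin assms(2) \<open>V \<noteq> {}\<close>]
  show ?thesis
    unfolding iso regular_token_graph_iff[OF assms(1)]
  proof
    assume "\<exists>d. \<forall>A\<subseteq>V. card A = k \<longrightarrow> cut_size V E A = d"
    then obtain d where "\<forall>A\<subseteq>V. card A = k \<longrightarrow> cut_size V E A = d" ..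
    then have "complete_on V E \<or> edgeless_on V E \<or> (2 * k = n \<and> (\<exists>c. star_on V E c \<or> costar_on V E c))"
      by (intro shape_if_cut_size_constant[OF assms]) auto
    then show "complete_on V E \<or> edgeless_on V E \<or> (\<exists>c. star_on V E c) \<and> 2 * k = n
        \<or> (\<exists>c. costar_on V E c) \<and> 2 * k = n"
      by blast
  next
    assume "complete_on V E \<or> edgeless_on V E \<or> (\<exists>c. star_on V E c) \<and> 2 * k = n
        \<or> (\<exists>c. costar_on V E c) \<and> 2 * k = n"
    then show "\<exists>d. \<forall>A\<subseteq>V. card A = k \<longrightarrow> cut_size V E A = d"
      by (intro cut_size_constant_if_shape[OF fin assms(2)]) blast
  qed
qed

end
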